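(* For every integer $n\ge1$ and every $w>0$ with $w\ne1$, $$F_n(w)\le\frac{n}{2\sqrt{w}\,|w-1|}.$$
   Context: For $w>0$ and integer $n\ge1$ let $a_n(w)=\sum_{j=0}^n w^j$, $b_n(w)=\sum_{j=1}^n jw^j$, $c_n(w)=\sum_{j=0}^n j^2w^j$, and $$F_n(w)=\frac{1}{2\sqrt{w}}\sqrt{\frac{c_n(w)}{a_n(w)}}\sqrt{\frac{a_n(w)c_n(w)-b_n(w)^2}{w\,a_n(w)^2}}.$$ *)

theory Defs
  imports Complex_Main
begin

definition a_n :: "nat \<Rightarrow> real \<Rightarrow> real" where
  "a_n n w = (\<Sum>j=0..n. w ^ j)"

definition b_n :: "nat \<Rightarrow> real \<Rightarrow> real" where
  "b_n n w = (\<Sum>j=1..n. real j * w ^ j)"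

definition c_n :: "nat \<Rightarrow> real \<Rightarrow> real" where
  "c_n n w = (\<Sum>j=0..n. (real j)^2 * w ^ j)"

definition F_n :: "nat \<Rightarrow> real \<Rightarrow> real" where
  "F_n n w = 1 / (2 * sqrt w) * sqrt (c_n n w / a_n n w)
     * sqrt ((a_n n w * c_n n w - (b_n n w)^2) / (w * (a_n n w)^2))"

end

theory Submission
  imports Defs
begin

text \<open>Read \<open>a\<close>, \<open>b\<close>, \<open>c\<close> as the zeroth, first and second moments of the weights \<open>w\<^sup>j\<close> on
  \<open>{0..n}\<close>. The second moment is at most \<open>n\<^sup>2\<close> times the mass, so \<open>c/a \<le> n\<^sup>2\<close>. For the
  variance term, multiply by powers of \<open>1 - w\<close>: with \<open>q = w\<^sup>n\<^sup>+\<^sup>1\<close> the three sums have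
  closed forms, and they combine into the identity
  \<open>(a c - b\<^sup>2) (1 - w)\<^sup>4 = w (1 - q)\<^sup>2 - (n + 1)\<^sup>2 q (1 - w)\<^sup>2\<close>.
  Dropping the negative term and using \<open>a (1 - w) = 1 - q\<close> gives
  \<open>(a c - b\<^sup>2) / (w a\<^sup>2) \<le> 1 / (1 - w)\<^sup>2\<close>; multiplying the two square-root bounds yields the claim.\<close>

lemma a_n_closed_form: "a_n n w * (1 - w) = 1 - w ^ (n + 1)"
proof (induction n)
  case 0
  then show ?case by (simp add: a_n_def)
next
  case (Suc n)
  have "a_n (Suc n) w * (1 - w) = a_n n w * (1 - w) + w ^ Suc n * (1 - w)"
    by (simp add: a_n_def algebra_simps)
  also have "\<dots> = 1 - w ^ (Suc n + 1)"
    using Suc by (simp add: algebra_simps)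
  finally show ?case .
qed

lemma b_n_closed_form:
  "b_n n w * (1 - w)^2 = w - (real n + 1) * w ^ (n + 1) + real n * w ^ (n + 2)"
proof (induction n)
  case 0
  then show ?case by (simp add: b_n_def)
next
  case (Suc n)
  have "b_n (Suc n) w * (1 - w)^2 = b_n n w * (1 - w)^2 + real (Suc n) * w ^ Suc n * (1 - w)^2"
    by (simp add: b_n_def algebra_simps)
  also have "\<dots> = w - (real (Suc n) + 1) * w ^ (Suc n + 1) + real (Suc n) * w ^ (Suc n + 2)"
    using Suc by (simp add: algebra_simps power2_eq_square power_add)
  finally show ?case .
qed

lemma c_n_closed_form:
  "c_n n w * (1 - w)^3 = w + w^2 - (real n + 1)^2 * w ^ (n + 1)
     + (2 * (real n)^2 + 2 * real n - 1) * w ^ (n + 2) - (real n)^2 * w ^ (n + 3)"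
proof (induction n)
  case 0
  then show ?case by (simp add: c_n_def algebra_simps power2_eq_square power3_eq_cube)
next
  case (Suc n)
  have "c_n (Suc n) w * (1 - w)^3 = c_n n w * (1 - w)^3 + (real (Suc n))^2 * w ^ Suc n * (1 - w)^3"
    by (simp add: c_n_def algebra_simps)
  also have "\<dots> = w + w^2 - (real (Suc n) + 1)^2 * w ^ (Suc n + 1)
     + (2 * (real (Suc n))^2 + 2 * real (Suc n) - 1) * w ^ (Suc n + 2)
     - (real (Suc n))^2 * w ^ (Suc n + 3)"
    using Suc by (simp add: algebra_simps power2_eq_square power3_eq_cube power4_eq_xxxx power_add)
  finally show ?case .
qed

lemma a_n_pos: "w > 0 \<Longrightarrow> a_n n w > 0"
  unfolding a_n_def by (simp add: sum_pos)

lemma c_n_nonneg: "w \<ge> 0 \<Longrightarrow> c_n n w \<ge> 0"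
  unfolding c_n_def by (intro sum_nonneg) simp

lemma c_n_le_a_n: "w \<ge> 0 \<Longrightarrow> c_n n w \<le> (real n)^2 * a_n n w"
  unfolding c_n_def a_n_def sum_distrib_left
  by (intro sum_mono mult_right_mono power_mono) auto

lemma sqrt_c_n_div_a_n_le: "w > 0 \<Longrightarrow> sqrt (c_n n w / a_n n w) \<le> real n"
  using c_n_le_a_n[of w n] a_n_pos[of w n]
  by (simp add: real_le_lsqrt divide_simps)

lemma variance_mul_square_le:
  assumes "w > 0" "w \<noteq> 1"
  shows "(a_n n w * c_n n w - (b_n n w)^2) * (1 - w)^2 \<le> w * (a_n n w)^2"
proof -
  define q where "q = w ^ (n + 1)"
  define N where "N = real n"
  have A: "a_n n w * (1 - w) = 1 - q"
    using a_n_closed_form by (simp add: q_def)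
  have B: "b_n n w * (1 - w)^2 = w - (N + 1) * q + N * (q * w)"
    using b_n_closed_form[of n w] by (simp add: q_def N_def)
  have C: "c_n n w * (1 - w)^3
      = w + w^2 - (N + 1)^2 * q + (2 * N^2 + 2 * N - 1) * (q * w) - N^2 * (q * w^2)"
    using c_n_closed_form[of n w]
    by (simp add: q_def N_def power_add power2_eq_square power3_eq_cube numeral_3_eq_3)
  have "((a_n n w * c_n n w - (b_n n w)^2) * (1 - w)^2) * (1 - w)^2
      = (a_n n w * (1 - w)) * (c_n n w * (1 - w)^3) - (b_n n w * (1 - w)^2)^2"
    by (simp add: algebra_simps power2_eq_square power3_eq_cube)
  also have "\<dots> = w * (1 - q)^2 - (N + 1)^2 * q * (1 - w)^2"
    unfolding A B C by (simp add: algebra_simps power2_eq_square)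
  also have "\<dots> \<le> w * (1 - q)^2"
    using \<open>w > 0\<close> by (simp add: q_def)
  also have "\<dots> = (w * (a_n n w)^2) * (1 - w)^2"
    by (simp flip: A add: power_mult_distrib)
  finally show ?thesis
    using \<open>w \<noteq> 1\<close> by simp
qed

lemma sqrt_variance_le:
  assumes "w > 0" "w \<noteq> 1"
  shows "sqrt ((a_n n w * c_n n w - (b_n n w)^2) / (w * (a_n n w)^2)) \<le> 1 / \<bar>w - 1\<bar>"
proof -
  have "(a_n n w * c_n n w - (b_n n w)^2) / (w * (a_n n w)^2) \<le> 1 / (1 - w)^2"
    using variance_mul_square_le[OF assms, of n] a_n_pos[OF \<open>w > 0\<close>, of n] assms
    by (simp add: divide_simps mult.commute mult.left_commute)
  then have "sqrt ((a_n n w * c_n n w - (b_n n w)^2) / (w * (a_n n w)^2)) \<le> sqrt (1 / (1 - w)^2)"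
    by (rule real_sqrt_le_mono)
  also have "\<dots> = 1 / \<bar>w - 1\<bar>"
    by (simp add: real_sqrt_divide abs_minus_commute)
  finally show ?thesis .
qed

text \<open>No sign of the variance factor is required either,
  although \<open>sqrt\<close> of a negative real is negative in Isabelle: the product bound below only
  asks the first factor to be nonnegative.\<close>

lemma mult_le_mult_bound:
  fixes x y X Y :: real
  assumes "0 \<le> x" "x \<le> X" "y \<le> Y" "0 \<le> Y"
  shows "x * y \<le> X * Y"
  using assms mult_left_mono[of y Y x] mult_right_mono[of x X Y] by linarith

theorem mainTheorem11:
  fixes n :: nat and w :: real
  assumes "n \<ge> 1" and "w > 0" and "w \<noteq> 1"
  shows "F_n n w \<le> real n / (2 * sqrt w * \<bar>w - 1\<bar>)"
proof -
  have "sqrt (c_n n w / a_n n w) * sqrt ((a_n n w * c_n n w - (b_n n w)^2) / (w * (a_n n w)^2))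
      \<le> real n * (1 / \<bar>w - 1\<bar>)"
    using assms(2,3) c_n_nonneg[of w n] a_n_pos[of w n]
    by (intro mult_le_mult_bound sqrt_c_n_div_a_n_le sqrt_variance_le) simp_all
  then have "1 / (2 * sqrt w) * (sqrt (c_n n w / a_n n w)
        * sqrt ((a_n n w * c_n n w - (b_n n w)^2) / (w * (a_n n w)^2)))
      \<le> 1 / (2 * sqrt w) * (real n * (1 / \<bar>w - 1\<bar>))"
    using assms(2) by (intro mult_left_mono) simp_all
  then show ?thesis
    unfolding F_n_def by (simp add: mult.assoc)
qed

end
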